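(* For integers $m\ge1$ and $k\ge1$, $$\sum_{i=0}^{k}\mu(P|_m,i,J^{*})\binom{m-2i}{2k-2i}\equiv\mu(P|_m,k,L)\pmod 2.$$
   Context: Let $N=\{0,1,2,\ldots\}$, $J^{*}=\{(2n+1)2^{2k}-1 : n,k\in N,\ k>0\}$, $L=N\setminus J^{*}$, and $P=\{k\in N: k\equiv0,3\pmod 4\}$. For an infinite set $A\subseteq N$, $A|_m$ denotes the set of the $m$ smallest elements of $A$. An involution on a finite set $A$ is a permutation $\sigma$ of $A$ with $\sigma=\sigma^{-1}$; its cycles are fixed points and transpositions $(c,d)$. A transposition $(c,d)$ is said to be in a set $B$ if $c+d\in B$. For a finite set $A\subseteq N$, an integer $k\ge0$ and a set $B\subseteq N$, $\mu(A,k,B)$ denotes the number of involutions of $A$ having exactly $k$ transpositions, all of which are in $B$. Binomial coefficients $\binom{a}{b}$ with $b>a$ or $b<0$ are $0$. *)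

theory Defs
  imports Main "HOL-Library.Infinite_Set" "HOL-Combinatorics.Permutations"
begin

definition Jstar :: "nat set" where
  "Jstar = {(2*n+1) * 2^(2*k) - 1 | n k. k > 0}"

definition Lset :: "nat set" where
  "Lset = UNIV - Jstar"

definition Pset :: "nat set" where
  "Pset = {k. k mod 4 = 0 \<or> k mod 4 = 3}"

text \<open>The set of the m smallest elements of an infinite set A.\<close>
definition restr :: "nat set \<Rightarrow> nat \<Rightarrow> nat set" where
  "restr A m = enumerate A ` {..<m}"

definition involution_on :: "nat set \<Rightarrow> (nat \<Rightarrow> nat) \<Rightarrow> bool" where
  "involution_on A \<sigma> \<longleftrightarrow> \<sigma> permutes A \<and> \<sigma> \<circ> \<sigma> = id"

definition transps :: "nat set \<Rightarrow> (nat \<Rightarrow> nat) \<Rightarrow> nat set set" where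
  "transps A \<sigma> = {{c, \<sigma> c} | c. c \<in> A \<and> \<sigma> c \<noteq> c}"

definition mu :: "nat set \<Rightarrow> nat \<Rightarrow> nat set \<Rightarrow> nat" where
  "mu A k B = card {\<sigma>. involution_on A \<sigma> \<and> card (transps A \<sigma>) = k
      \<and> (\<forall>c\<in>A. \<sigma> c \<noteq> c \<longrightarrow> c + \<sigma> c \<in> B)}"

definition binom_int :: "int \<Rightarrow> nat \<Rightarrow> nat" where
  "binom_int a b = (if a < 0 then 0 else nat a choose b)"

end

theory Submission
  imports Defs
begin

text \<open>
  An involution is determined by its set of transpositions, which is a matching of \<open>A\<close>, so both
  sides count matchings. For a matching \<open>S\<close> of size \<open>i\<close>, the matchings of size \<open>k\<close> containing
  \<open>S\<close> are the matchings of size \<open>k - i\<close> of the remaining \<open>m - 2i\<close> points; removing one point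
  shows that the number of \<open>j\<close>-matchings of an \<open>n\<close>-set is congruent to \<open>n choose 2j\<close> modulo 2.
  Hence the left-hand side counts, modulo 2, the pairs \<open>S \<subseteq> M\<close> with \<open>M\<close> a \<open>k\<close>-matching and \<open>S\<close>
  consisting of edges with sum in \<open>J*\<close>. For fixed \<open>M\<close> there are \<open>2^c\<close> such \<open>S\<close>, where \<open>c\<close> is
  the number of such edges of \<open>M\<close>; this is odd iff \<open>c = 0\<close>, i.e. iff all edge sums lie in \<open>L\<close>.
\<close>

lemma sum_mod_cong:
  "(\<And>x. x \<in> X \<Longrightarrow> f x mod n = g x mod n) \<Longrightarrow> sum f X mod n = sum g X mod (n :: nat)"
  by (metis (mono_tags, lifting) mod_sum_eq sum.cong)

lemma sum_power2_mod2:
  "finite X \<Longrightarrow> (\<Sum>x\<in>X. 2 ^ f x :: nat) mod 2 = card {x \<in> X. f x = 0} mod 2"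
proof -
  assume "finite X"
  have "(\<Sum>x\<in>X. 2 ^ f x :: nat) mod 2 = (\<Sum>x\<in>X. if f x = 0 then 1 else 0) mod 2"
    by (intro sum_mod_cong) auto
  also have "(\<Sum>x\<in>X. if f x = 0 then 1 else 0 :: nat) = card {x \<in> X. f x = 0}"
    using \<open>finite X\<close> by (simp add: sum.If_cases Int_def)
  finally show ?thesis .
qed

lemma bij_betw_Collect_filter:
  "bij_betw f X Y \<Longrightarrow> bij_betw f {x \<in> X. P (f x)} {y \<in> Y. P y}"
  unfolding bij_betw_def inj_on_def by (auto simp: image_iff)

lemma pairwise_disjnt_Un:
  "pairwise disjnt S \<Longrightarrow> pairwise disjnt R \<Longrightarrow> (\<And>e f. e \<in> S \<Longrightarrow> f \<in> R \<Longrightarrow> disjnt e f)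
    \<Longrightarrow> pairwise disjnt (S \<union> R)"
  unfolding pairwise_def by (metis Un_iff disjnt_sym)

definition doubletons :: "'a set \<Rightarrow> 'a set set" where
  "doubletons A = {e. e \<subseteq> A \<and> card e = 2}"

definition matchings :: "'a set \<Rightarrow> 'a set set set" where
  "matchings A = {M. M \<subseteq> doubletons A \<and> pairwise disjnt M}"

definition num_matchings :: "'a set \<Rightarrow> nat \<Rightarrow> nat" where
  "num_matchings A j = card {M \<in> matchings A. card M = j}"

lemma matchings_subset_Pow_Pow: "matchings A \<subseteq> Pow (Pow A)"
  by (auto simp: matchings_def doubletons_def)

lemma finite_matchings: "finite A \<Longrightarrow> finite (matchings A)"
  using matchings_subset_Pow_Pow by (metis finite_Pow_iff finite_subset)

lemma finite_matching: "finite A \<Longrightarrow> M \<in> matchings A \<Longrightarrow> finite M"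
  using matchings_subset_Pow_Pow by (metis PowD finite_Pow_iff finite_subset subsetD)

lemma matching_edge_neq: "M \<in> matchings A \<Longrightarrow> {x, y} \<in> M \<Longrightarrow> x \<noteq> y"
  by (auto simp: matchings_def doubletons_def)

lemma matching_partner_unique:
  assumes "M \<in> matchings A" "{x, y} \<in> M" "{x, z} \<in> M"
  shows "y = z"
proof -
  have "pairwise disjnt M" "\<not> disjnt {x, y} {x, z}"
    using assms(1) by (auto simp: matchings_def)
  then have "{x, y} = {x, z}"
    using assms(2,3) by (metis pairwise_def)
  then show ?thesis
    using matching_edge_neq[OF assms(1,2)] by (auto simp: doubleton_eq_iff)
qed

lemma matching_subset: "M \<in> matchings A \<Longrightarrow> N \<subseteq> M \<Longrightarrow> N \<in> matchings A"
  unfolding matchings_def using pairwise_subset by blast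

lemma matchings_mono: "A \<subseteq> B \<Longrightarrow> matchings A \<subseteq> matchings B"
  by (auto simp: matchings_def doubletons_def)

lemma Union_matching_subset: "M \<in> matchings A \<Longrightarrow> \<Union>M \<subseteq> A"
  by (auto simp: matchings_def doubletons_def)

lemma card_Union_matching:
  assumes "finite A" "M \<in> matchings A"
  shows "card (\<Union>M) = 2 * card M"
proof -
  have edges: "finite e" "card e = 2" if "e \<in> M" for e
    using assms that unfolding matchings_def doubletons_def by (auto intro: finite_subset)
  have "card (\<Union>M) = sum card M"
    using assms(2) edges(1) by (simp add: matchings_def card_Union_disjoint)
  also have "\<dots> = 2 * card M"
    using edges(2) by simp
  finally show ?thesis .
qed

lemma matching_Un:
  assumes S: "S \<in> matchings A" and R: "R \<in> matchings (A - \<Union>S)"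
  shows "S \<union> R \<in> matchings A"
proof -
  have "S \<union> R \<subseteq> doubletons A"
    using S R by (auto simp: matchings_def doubletons_def)
  moreover have "disjnt e f" if "e \<in> S" "f \<in> R" for e f
    using R that by (auto simp: matchings_def doubletons_def disjnt_def)
  ultimately show ?thesis
    using S R pairwise_disjnt_Un by (auto simp: matchings_def)
qed

lemma matching_Diff:
  assumes M: "M \<in> matchings A" and "S \<subseteq> M"
  shows "M - S \<in> matchings (A - \<Union>S)"
proof -
  have "e \<subseteq> A - \<Union>S" "card e = 2" if e: "e \<in> M - S" for e
  proof -
    have "disjnt e f" if "f \<in> S" for f
      using M e that assms(2) by (auto simp: matchings_def intro: pairwiseD[of disjnt M])
    moreover have "e \<subseteq> A" "card e = 2"
      using M e by (auto simp: matchings_def doubletons_def)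
    ultimately show "e \<subseteq> A - \<Union>S" "card e = 2"
      unfolding disjnt_def by blast+
  qed
  then have "M - S \<subseteq> doubletons (A - \<Union>S)"
    unfolding doubletons_def by blast
  moreover have "pairwise disjnt (M - S)"
    using M pairwise_subset[of disjnt M "M - S"] by (simp add: matchings_def)
  ultimately show ?thesis
    by (simp add: matchings_def)
qed

lemma matching_disjoint_Union_complement:
  assumes "R \<in> matchings (A - \<Union>S)"
  shows "S \<inter> R = {}"
proof -
  have "e \<noteq> {}" "e \<inter> \<Union>S = {}" if "e \<in> R" for e
    using assms that by (auto simp: matchings_def doubletons_def)
  then show ?thesis by blast
qed

lemma involution_onD:
  assumes "involution_on A s"
  shows "c \<in> A \<Longrightarrow> s c \<in> A" and "s (s c) = c" and "c \<notin> A \<Longrightarrow> s c = c"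
  using assms unfolding involution_on_def
  by (auto simp: permutes_in_image permutes_not_in pointfree_idE)

lemma transps_in_matchings:
  assumes "involution_on A s"
  shows "transps A s \<in> matchings A"
  using involution_onD[OF assms]
  unfolding transps_def matchings_def doubletons_def pairwise_def disjnt_def
  by auto metis+

lemma transps_determine_moved:
  assumes s: "involution_on A s" and t: "involution_on A t"
    and "transps A s \<subseteq> transps A t" and "s x \<noteq> x"
  shows "t x = s x"
proof -
  have "x \<in> A" using involution_onD(3)[OF s] \<open>s x \<noteq> x\<close> by blast
  then have "{x, s x} \<in> transps A t"
    using assms(3,4) unfolding transps_def by auto
  then obtain c where "t c \<noteq> c" "{x, s x} = {c, t c}"
    unfolding transps_def by auto
  then show ?thesis
    using involution_onD(2)[OF t] \<open>s x \<noteq> x\<close> by (auto simp: doubleton_eq_iff)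
qed

lemma inj_on_transps: "inj_on (transps A) {s. involution_on A s}"
proof (rule inj_onI, rule ext)
  fix s t x
  assume "s \<in> {s. involution_on A s}" "t \<in> {s. involution_on A s}" "transps A s = transps A t"
  then show "s x = t x"
    using transps_determine_moved[of A s t x] transps_determine_moved[of A t s x] by fastforce
qed

definition matching_partner :: "'a set set \<Rightarrow> 'a \<Rightarrow> 'a" where
  "matching_partner M x = (if \<exists>y. {x, y} \<in> M then THE y. {x, y} \<in> M else x)"

lemma matching_partner_eq:
  assumes "M \<in> matchings A" "{x, y} \<in> M"
  shows "matching_partner M x = y"
  using assms matching_partner_unique unfolding matching_partner_def by (metis the_equality)

lemma matching_partner_unmatched: "\<not> (\<exists>y. {x, y} \<in> M) \<Longrightarrow> matching_partner M x = x"
  by (simp add: matching_partner_def)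

lemma involution_on_matching_partner:
  assumes M: "M \<in> matchings A"
  shows "involution_on A (matching_partner M)"
proof -
  let ?p = "matching_partner M"
  have pp: "?p (?p x) = x" for x
  proof (cases "\<exists>y. {x, y} \<in> M")
    case True
    then obtain y where "{x, y} \<in> M" "{y, x} \<in> M" by (auto simp: insert_commute)
    then show ?thesis using matching_partner_eq[OF M] by simp
  qed (simp add: matching_partner_unmatched)
  have "?p x = x" if "x \<notin> A" for x
    using M that by (intro matching_partner_unmatched) (auto simp: matchings_def doubletons_def)
  then have "?p permutes A"
    unfolding permutes_def by (metis pp)
  then show ?thesis
    unfolding involution_on_def using pp by auto
qed

lemma transps_matching_partner:
  assumes M: "M \<in> matchings A"
  shows "transps A (matching_partner M) = M"
proof -
  let ?p = "matching_partner M"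
  have moved: "?p c \<noteq> c \<longleftrightarrow> {c, ?p c} \<in> M" for c
  proof (cases "\<exists>y. {c, y} \<in> M")
    case True
    then obtain y where "{c, y} \<in> M" by blast
    then show ?thesis using matching_partner_eq[OF M] matching_edge_neq[OF M] by fastforce
  next
    case False
    then show ?thesis by (metis insert_absorb2 matching_partner_unmatched)
  qed
  have "e \<in> transps A ?p" if e: "e \<in> M" for e
  proof -
    obtain x y where "e = {x, y}" "x \<noteq> y" "x \<in> A"
      using M e by (auto simp: matchings_def doubletons_def card_2_iff)
    then show ?thesis
      using matching_partner_eq[OF M] e unfolding transps_def by auto
  qed
  then show ?thesis
    unfolding transps_def using moved by auto
qed

lemma bij_betw_transps: "bij_betw (transps A) {s. involution_on A s} (matchings A)"
proof -
  have "transps A ` {s. involution_on A s} = matchings A"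
    using transps_in_matchings involution_on_matching_partner transps_matching_partner
    by (auto intro!: image_eqI)
  then show ?thesis
    using inj_on_transps by (simp add: bij_betw_def)
qed

lemma transps_sums_in_iff:
  "(\<forall>c\<in>A. s c \<noteq> c \<longrightarrow> c + s c \<in> B) \<longleftrightarrow> (\<forall>e\<in>transps A s. \<Sum>e \<in> B)"
proof -
  have sum_pair: "\<Sum>{c, s c} = c + s c" if "s c \<noteq> c" for c
    using that by simp
  show ?thesis
  proof
    assume "\<forall>c\<in>A. s c \<noteq> c \<longrightarrow> c + s c \<in> B"
    then show "\<forall>e\<in>transps A s. \<Sum>e \<in> B"
      unfolding transps_def using sum_pair by auto
  next
    assume all: "\<forall>e\<in>transps A s. \<Sum>e \<in> B"
    show "\<forall>c\<in>A. s c \<noteq> c \<longrightarrow> c + s c \<in> B"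
    proof (intro ballI impI)
      fix c assume "c \<in> A" "s c \<noteq> c"
      then have "{c, s c} \<in> transps A s"
        unfolding transps_def by blast
      then show "c + s c \<in> B"
        using all sum_pair[OF \<open>s c \<noteq> c\<close>] by metis
    qed
  qed
qed

lemma mu_eq_card_matchings:
  "mu A k B = card {M \<in> matchings A. card M = k \<and> (\<forall>e\<in>M. \<Sum>e \<in> B)}"
proof -
  have "bij_betw (transps A)
          {s \<in> {s. involution_on A s}. card (transps A s) = k \<and> (\<forall>e\<in>transps A s. \<Sum>e \<in> B)}
          {M \<in> matchings A. card M = k \<and> (\<forall>e\<in>M. \<Sum>e \<in> B)}"
    by (rule bij_betw_Collect_filter[OF bij_betw_transps])
  then show ?thesis
    unfolding mu_def using transps_sums_in_iff
    by (simp add: bij_betw_same_card conj_commute cong: conj_cong)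
qed

lemma card_supermatchings:
  assumes A: "finite A" and S: "S \<in> matchings A" and k: "card S \<le> k"
  shows "card {M \<in> matchings A. card M = k \<and> S \<subseteq> M} = num_matchings (A - \<Union>S) (k - card S)"
proof -
  let ?R = "{R \<in> matchings (A - \<Union>S). card R = k - card S}"
  let ?M = "{M \<in> matchings A. card M = k \<and> S \<subseteq> M}"
  have "bij_betw (\<lambda>R. S \<union> R) ?R ?M"
  proof (rule bij_betw_byWitness[where f' = "\<lambda>M. M - S"])
    show "\<forall>R\<in>?R. S \<union> R - S = R"
      using matching_disjoint_Union_complement by blast
    show "\<forall>M\<in>?M. S \<union> (M - S) = M" by blast
    show "(\<lambda>R. S \<union> R) ` ?R \<subseteq> ?M"
    proof (rule image_subsetI)
      fix R assume "R \<in> ?R"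
      then have R: "R \<in> matchings (A - \<Union>S)" "card R = k - card S" by auto
      have "card (S \<union> R) = card S + card R"
        using R matching_disjoint_Union_complement finite_matching A S
        by (metis card_Un_disjoint finite_Diff)
      then show "S \<union> R \<in> ?M" using R k matching_Un[OF S] by simp
    qed
    show "(\<lambda>M. M - S) ` ?M \<subseteq> ?R"
      using matching_Diff finite_matching[OF A S] by (auto simp: card_Diff_subset)
  qed
  then show ?thesis
    unfolding num_matchings_def by (simp add: bij_betw_same_card)
qed

lemma num_matchings_0: "finite A \<Longrightarrow> num_matchings A 0 = 1"
proof -
  assume "finite A"
  then have "{M \<in> matchings A. card M = 0} = {{}}"
    using finite_matching[OF \<open>finite A\<close>] by (auto simp: matchings_def)
  then show ?thesis unfolding num_matchings_def by simp
qed

lemma matchings_empty: "matchings {} = {{}}"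
  by (auto simp: matchings_def doubletons_def)

lemma num_matchings_empty_Suc: "num_matchings {} (Suc j) = 0"
  by (simp add: num_matchings_def matchings_empty)

lemma matchings_decompose_at:
  assumes "x \<in> A"
  shows "{M \<in> matchings A. card M = n} = {M \<in> matchings (A - {x}). card M = n}
           \<union> (\<Union>y\<in>A - {x}. {M \<in> matchings A. card M = n \<and> {x, y} \<in> M})"
proof (intro equalityI subsetI)
  fix M assume M: "M \<in> {M \<in> matchings A. card M = n}"
  show "M \<in> {M \<in> matchings (A - {x}). card M = n}
           \<union> (\<Union>y\<in>A - {x}. {M \<in> matchings A. card M = n \<and> {x, y} \<in> M})"
  proof (cases "x \<in> \<Union>M")
    case True
    then obtain e where e: "e \<in> M" "x \<in> e" by blast
    then have "card e = 2" "e \<subseteq> A" using M by (auto simp: matchings_def doubletons_def)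
    with e obtain y where "e = {x, y}" "y \<in> A - {x}" by (auto simp: card_2_iff)
    then show ?thesis using M e by blast
  next
    case False
    then show ?thesis using M by (auto simp: matchings_def doubletons_def)
  qed
qed (use matchings_mono[of "A - {x}" A] in auto)

lemma num_matchings_Suc:
  assumes A: "finite A" and x: "x \<in> A"
  shows "num_matchings A (Suc j)
           = num_matchings (A - {x}) (Suc j) + (\<Sum>y\<in>A - {x}. num_matchings (A - {x, y}) j)"
proof -
  let ?Q = "\<lambda>y. {M \<in> matchings A. card M = Suc j \<and> {x, y} \<in> M}"
  have finite_Q: "finite (?Q y)" for y
    using finite_matchings[OF A] by simp
  have card_Q: "card (?Q y) = num_matchings (A - {x, y}) j" if y: "y \<in> A - {x}" for y
  proof -
    have S: "{{x, y}} \<in> matchings A"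
      using x y by (auto simp: matchings_def doubletons_def)
    show ?thesis
      using card_supermatchings[OF A S, of "Suc j"] by simp
  qed
  have disjoint_Q: "?Q y \<inter> ?Q z = {}" if "y \<noteq> z" for y z
    using that by (blast dest: matching_partner_unique)
  have "num_matchings A (Suc j)
          = card {M \<in> matchings (A - {x}). card M = Suc j} + card (\<Union>y\<in>A - {x}. ?Q y)"
    unfolding num_matchings_def matchings_decompose_at[OF x]
    by (rule card_Un_disjoint) (use A finite_matchings finite_Q in \<open>auto simp: matchings_def doubletons_def\<close>)
  also have "card (\<Union>y\<in>A - {x}. ?Q y) = (\<Sum>y\<in>A - {x}. card (?Q y))"
    using A finite_Q disjoint_Q by (intro card_UN_disjoint) auto
  finally show ?thesis
    using card_Q unfolding num_matchings_def by simp
qed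

text \<open>
  Whether a fixed point is matched or not gives \<open>N(n, j+1) = N(n-1, j+1) + (n-1) N(n-2, j)\<close> for
  the number \<open>N(n, j)\<close> of \<open>j\<close>-matchings of an \<open>n\<close>-set, and \<open>(n-1) C(n-2, 2j) = (2j+1) C(n-1, 2j+1)\<close>
  is an odd multiple of \<open>C(n-1, 2j+1)\<close>; Pascal's rule closes the induction.
\<close>

lemma num_matchings_parity:
  "finite A \<Longrightarrow> num_matchings A j mod 2 = (card A choose (2 * j)) mod 2"
proof (induction "card A" arbitrary: A j rule: less_induct)
  case less
  show ?case
  proof (cases j)
    case 0
    then show ?thesis using num_matchings_0[OF less.prems] by simp
  next
    case (Suc i)
    show ?thesis
    proof (cases "A = {}")
      case True
      then show ?thesis using Suc by (simp add: num_matchings_empty_Suc)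
    next
      case False
      then obtain x where x: "x \<in> A" by blast
      define n where "n = card (A - {x})"
      have card_Ax: "card (A - {x}) = n"
        by (simp add: n_def)
      have card_A: "card A = Suc n"
        using card_Suc_Diff1[OF less.prems x] by (simp add: n_def)
      have card_Axy: "card (A - {x, y}) = n - 1" if "y \<in> A - {x}" for y
      proof -
        have "card {x, y} = 2"
          using that by auto
        then show ?thesis
          using that x less.prems card_A by (simp add: card_Diff_subset)
      qed
      have "(\<Sum>y\<in>A - {x}. num_matchings (A - {x, y}) i) mod 2
              = (\<Sum>y\<in>A - {x}. (n - 1) choose (2 * i)) mod 2"
        using less card_A card_Axy by (intro sum_mod_cong) auto
      also have "\<dots> = (Suc (2 * i) * (n choose Suc (2 * i))) mod 2"
        using card_Ax binomial_absorption[of "2 * i" n] by simp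
      also have "\<dots> = (n choose Suc (2 * i)) mod 2"
        by (simp add: mult.assoc)
      finally have pairs: "(\<Sum>y\<in>A - {x}. num_matchings (A - {x, y}) i) mod 2
                              = (n choose Suc (2 * i)) mod 2" .
      have rest: "num_matchings (A - {x}) (Suc i) mod 2 = (n choose (2 * Suc i)) mod 2"
        using less card_A card_Ax by simp
      have "num_matchings A j mod 2
              = (num_matchings (A - {x}) (Suc i) + (\<Sum>y\<in>A - {x}. num_matchings (A - {x, y}) i)) mod 2"
        using num_matchings_Suc[OF less.prems x] Suc by simp
      also have "\<dots> = ((n choose (2 * Suc i)) + (n choose Suc (2 * i))) mod 2"
        using rest pairs by (metis mod_add_eq)
      also have "(n choose (2 * Suc i)) + (n choose Suc (2 * i)) = card A choose (2 * j)"
        using card_A Suc by simp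
      finally show ?thesis .
    qed
  qed
qed

lemma card_supermatchings_parity:
  assumes A: "finite A" and S: "S \<in> matchings A" and k: "card S \<le> k"
  shows "card {M \<in> matchings A. card M = k \<and> S \<subseteq> M} mod 2
           = binom_int (int (card A) - 2 * int (card S)) (2 * k - 2 * card S) mod 2"
proof -
  have sub: "\<Union>S \<subseteq> A"
    using S by (rule Union_matching_subset)
  have card_rest: "card (A - \<Union>S) = card A - 2 * card S"
    using A sub card_Union_matching[OF A S] by (simp add: card_Diff_subset finite_subset)
  have "2 * card S \<le> card A"
    using card_mono[OF A sub] card_Union_matching[OF A S] by simp
  have "binom_int (int (card A) - 2 * int (card S)) (2 * k - 2 * card S)
               = (card A - 2 * card S) choose (2 * (k - card S))"
  proof -
    have "nat (int (card A) - 2 * int (card S)) = card A - 2 * card S"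
      using \<open>2 * card S \<le> card A\<close> by linarith
    moreover have "2 * k - 2 * card S = 2 * (k - card S)"
      by simp
    ultimately show ?thesis
      using \<open>2 * card S \<le> card A\<close> by (simp add: binom_int_def)
  qed
  then show ?thesis
    using card_supermatchings[OF assms] num_matchings_parity[of "A - \<Union>S"] A card_rest by simp
qed

lemma sum_card_supermatchings:
  assumes A: "finite A"
  shows "(\<Sum>S\<in>{S \<in> matchings A. card S \<le> k \<and> (\<forall>e\<in>S. P e)}.
            card {M \<in> matchings A. card M = k \<and> S \<subseteq> M})
         = (\<Sum>M\<in>{M \<in> matchings A. card M = k}. 2 ^ card {e \<in> M. P e})"
proof -
  let ?X = "{S \<in> matchings A. card S \<le> k \<and> (\<forall>e\<in>S. P e)}"
  let ?Mk = "{M \<in> matchings A. card M = k}"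
  have fin: "finite ?X" "finite ?Mk"
    using finite_matchings[OF A] by simp_all
  have "(\<Sum>S\<in>?X. card {M \<in> matchings A. card M = k \<and> S \<subseteq> M})
          = (\<Sum>S\<in>?X. \<Sum>M\<in>{M \<in> ?Mk. S \<subseteq> M}. 1 :: nat)"
    by (intro sum.cong) auto
  also have "\<dots> = (\<Sum>M\<in>?Mk. \<Sum>S\<in>{S \<in> ?X. S \<subseteq> M}. 1)"
    by (rule sum.swap_restrict[OF fin, where g = "\<lambda>_ _. 1 :: nat" and R = "\<lambda>S M. S \<subseteq> M"])
  also have "\<dots> = (\<Sum>M\<in>?Mk. 2 ^ card {e \<in> M. P e})"
  proof (intro sum.cong refl)
    fix M assume M: "M \<in> ?Mk"
    then have "finite M" using finite_matching[OF A] by blast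
    have "{S \<in> ?X. S \<subseteq> M} = Pow {e \<in> M. P e}"
    proof (intro equalityI subsetI)
      fix S assume "S \<in> Pow {e \<in> M. P e}"
      then have "S \<subseteq> M" "\<forall>e\<in>S. P e" by auto
      then show "S \<in> {S \<in> ?X. S \<subseteq> M}"
        using M matching_subset card_mono[OF \<open>finite M\<close>] by auto
    qed auto
    then show "(\<Sum>S\<in>{S \<in> ?X. S \<subseteq> M}. 1 :: nat) = 2 ^ card {e \<in> M. P e}"
      using \<open>finite M\<close> by (simp add: card_Pow)
  qed
  finally show ?thesis .
qed

theorem matchings_binomial_parity:
  assumes A: "finite A"
  shows "(\<Sum>i=0..k. card {S \<in> matchings A. card S = i \<and> (\<forall>e\<in>S. P e)}
                      * binom_int (int (card A) - 2 * int i) (2 * k - 2 * i)) mod 2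
         = card {M \<in> matchings A. card M = k \<and> (\<forall>e\<in>M. \<not> P e)} mod 2"
proof -
  let ?W = "\<lambda>i. {S \<in> matchings A. card S = i \<and> (\<forall>e\<in>S. P e)}"
  let ?X = "{S \<in> matchings A. card S \<le> k \<and> (\<forall>e\<in>S. P e)}"
  let ?E = "\<lambda>S. card {M \<in> matchings A. card M = k \<and> S \<subseteq> M}"
  have "(\<Sum>i=0..k. card (?W i) * binom_int (int (card A) - 2 * int i) (2 * k - 2 * i)) mod 2
          = (\<Sum>i=0..k. \<Sum>S\<in>?W i. binom_int (int (card A) - 2 * int i) (2 * k - 2 * i)) mod 2"
    by simp
  also have "\<dots> = (\<Sum>i=0..k. \<Sum>S\<in>?W i. ?E S) mod 2"
    using card_supermatchings_parity[OF A] by (intro sum_mod_cong) auto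
  also have "(\<Sum>i=0..k. \<Sum>S\<in>?W i. ?E S) = (\<Sum>i=0..k. sum ?E {S \<in> ?X. card S = i})"
    by (intro sum.cong) auto
  also have "\<dots> = sum ?E ?X"
    using finite_matchings[OF A] by (intro sum.group) auto
  also have "\<dots> = (\<Sum>M\<in>{M \<in> matchings A. card M = k}. 2 ^ card {e \<in> M. P e})"
    by (rule sum_card_supermatchings[OF A])
  also have "\<dots> mod 2 = card {M \<in> {M \<in> matchings A. card M = k}. card {e \<in> M. P e} = 0} mod 2"
    using finite_matchings[OF A] by (simp add: sum_power2_mod2)
  also have "{M \<in> {M \<in> matchings A. card M = k}. card {e \<in> M. P e} = 0}
               = {M \<in> matchings A. card M = k \<and> (\<forall>e\<in>M. \<not> P e)}"
    using finite_matching[OF A] by auto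
  finally show ?thesis .
qed

lemma infinite_Pset: "infinite Pset"
  unfolding infinite_nat_iff_unbounded
proof
  fix m :: nat
  have "4 * Suc m \<in> Pset" "m < 4 * Suc m"
    by (simp_all add: Pset_def)
  then show "\<exists>n>m. n \<in> Pset" by blast
qed

lemma card_restr_Pset: "finite (restr Pset m) \<and> card (restr Pset m) = m"
proof -
  have "inj_on (enumerate Pset) {..<m}"
    using inj_enumerate[OF infinite_Pset] by (rule inj_on_subset) simp
  then show ?thesis
    unfolding restr_def by (simp add: card_image)
qed

theorem lemma2p4:
  fixes m k :: nat
  assumes "m \<ge> 1" and "k \<ge> 1"
  shows "(\<Sum>i=0..k. mu (restr Pset m) i Jstar * binom_int (int m - 2 * int i) (2*k - 2*i)) mod 2
         = mu (restr Pset m) k Lset mod 2"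
  using matchings_binomial_parity[where A = "restr Pset m" and k = k and P = "\<lambda>e. \<Sum>e \<in> Jstar"] card_restr_Pset
  by (simp add: mu_eq_card_matchings Lset_def)

end
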